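(* For every limit-periodic potential $d\in\ell^\infty(\mathbb{Z})$, the topological group $\mathrm{hull}(d)$ is a procyclic group, i.e. it is isomorphic (as a topological group) to the inverse limit of an inverse system of finite cyclic groups.
   Context: $\sigma$ is the left shift on $\ell^\infty(\mathbb{Z})$ (sup norm), $(\sigma d)_n=d_{n+1}$, and $\mathrm{hull}(d)$ is the closure of $\{\sigma^k d:k\in\mathbb{Z}\}$. A potential is periodic if its shift orbit is finite, and limit-periodic if it lies in the $\ell^\infty$-closure of the periodic potentials. For limit-periodic $d$, $\mathrm{hull}(d)$ is compact and carries a unique topological group structure with identity $d$ such that $k\mapsto\sigma^k(d)$ is a homomorphism $\mathbb{Z}\to\mathrm{hull}(d)$. An inverse limit of an inverse system $(X_i,\phi_{ij})$ of topological groups (continuous homomorphisms $\phi_{ij}:X_j\to X_i$ for $i\le j$ in a directed set, with $\phi_{ii}=\mathrm{id}$, $\phi_{ij}\phi_{jk}=\phi_{ik}$) is a topological group $X$ with compatible continuous homomorphisms $\phi_i:X\to X_i$ ($\phi_{ij}\phi_j=\phi_i$) universal among such families; finite cyclic groups carry the discrete topology. *)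

theory Defs
  imports "HOL-Analysis.Analysis" "HOL-Algebra.Elementary_Groups"
begin

(* The type int has the discrete topology, so int \<Rightarrow>\<^sub>C real is exactly
  \<ell>^\<infinity>(\<int>) with its sup-norm metric. *)
type_synonym potential = "int \<Rightarrow>\<^sub>C real"

setup_lifting type_definition_bcontfun

lift_definition shiftp :: "int \<Rightarrow> potential \<Rightarrow> potential"
  is "\<lambda>k f n. f (n + k)"
proof -
  fix k :: int and f :: "int \<Rightarrow> real"
  assume "f \<in> bcontfun"
  then have "bounded (range f)" by (simp add: bcontfun_def)
  moreover have "range (\<lambda>n. f (n + k)) \<subseteq> range f" by auto
  ultimately have "bounded (range (\<lambda>n. f (n + k)))" using bounded_subset by blast
  moreover have "continuous_on UNIV (\<lambda>n::int. f (n + k))"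
    by (simp add: continuous_on_discrete)
  ultimately show "(\<lambda>n. f (n + k)) \<in> bcontfun" by (simp add: bcontfun_def)
qed

definition pot_hull :: "potential \<Rightarrow> potential set" where
  "pot_hull d = closure (range (\<lambda>k. shiftp k d))"

definition periodic_pot :: "potential \<Rightarrow> bool" where
  "periodic_pot p \<longleftrightarrow> finite (range (\<lambda>k. shiftp k p))"

definition limit_periodic :: "potential \<Rightarrow> bool" where
  "limit_periodic d \<longleftrightarrow> d \<in> closure {p. periodic_pot p}"

definition topological_group :: "('a, 'b) monoid_scheme \<Rightarrow> 'a topology \<Rightarrow> bool" where
  "topological_group G T \<longleftrightarrow> group G \<and> topspace T = carrier G \<and>
     continuous_map (prod_topology T T) T (\<lambda>(x, y). x \<otimes>\<^bsub>G\<^esub> y) \<and>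
     continuous_map T T (\<lambda>x. inv\<^bsub>G\<^esub> x)"

definition hull_group :: "potential \<Rightarrow> potential monoid \<Rightarrow> bool" where
  "hull_group d G \<longleftrightarrow> carrier G = pot_hull d \<and> topological_group G (top_of_set (pot_hull d)) \<and>
     \<one>\<^bsub>G\<^esub> = d \<and>
     (\<forall>j k. shiftp (j + k) d = shiftp j d \<otimes>\<^bsub>G\<^esub> shiftp k d)"

definition top_group_iso ::
  "('a, 'c) monoid_scheme \<Rightarrow> 'a topology \<Rightarrow> ('b, 'e) monoid_scheme \<Rightarrow> 'b topology \<Rightarrow> bool" where
  "top_group_iso G S H T \<longleftrightarrow> (\<exists>h. h \<in> iso G H \<and> homeomorphic_map S T h)"

definition inverse_system ::
  "'i set \<Rightarrow> ('i \<Rightarrow> 'i \<Rightarrow> bool) \<Rightarrow> ('i \<Rightarrow> 'a monoid) \<Rightarrow> ('i \<Rightarrow> 'i \<Rightarrow> 'a \<Rightarrow> 'a) \<Rightarrow> bool" where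
  "inverse_system I leq X \<phi> \<longleftrightarrow>
     I \<noteq> {} \<and>
     (\<forall>i\<in>I. leq i i) \<and>
     (\<forall>i\<in>I. \<forall>j\<in>I. \<forall>k\<in>I. leq i j \<longrightarrow> leq j k \<longrightarrow> leq i k) \<and>
     (\<forall>i\<in>I. \<forall>j\<in>I. \<exists>k\<in>I. leq i k \<and> leq j k) \<and>
     (\<forall>i\<in>I. group (X i)) \<and>
     (\<forall>i\<in>I. \<forall>j\<in>I. leq i j \<longrightarrow> \<phi> i j \<in> hom (X j) (X i)) \<and>
     (\<forall>i\<in>I. \<forall>x\<in>carrier (X i). \<phi> i i x = x) \<and>
     (\<forall>i\<in>I. \<forall>j\<in>I. \<forall>k\<in>I. leq i j \<longrightarrow> leq j k \<longrightarrow>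
        (\<forall>x\<in>carrier (X k). \<phi> i j (\<phi> j k x) = \<phi> i k x))"

definition inv_lim_carrier ::
  "'i set \<Rightarrow> ('i \<Rightarrow> 'i \<Rightarrow> bool) \<Rightarrow> ('i \<Rightarrow> 'a monoid) \<Rightarrow> ('i \<Rightarrow> 'i \<Rightarrow> 'a \<Rightarrow> 'a) \<Rightarrow> ('i \<Rightarrow> 'a) set" where
  "inv_lim_carrier I leq X \<phi> =
     {x \<in> (\<Pi>\<^sub>E i\<in>I. carrier (X i)). \<forall>i\<in>I. \<forall>j\<in>I. leq i j \<longrightarrow> \<phi> i j (x j) = x i}"

definition inv_lim ::
  "'i set \<Rightarrow> ('i \<Rightarrow> 'i \<Rightarrow> bool) \<Rightarrow> ('i \<Rightarrow> 'a monoid) \<Rightarrow> ('i \<Rightarrow> 'i \<Rightarrow> 'a \<Rightarrow> 'a) \<Rightarrow> ('i \<Rightarrow> 'a) monoid" where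
  "inv_lim I leq X \<phi> =
     \<lparr>carrier = inv_lim_carrier I leq X \<phi>,
      mult = (\<lambda>x y. \<lambda>i\<in>I. x i \<otimes>\<^bsub>X i\<^esub> y i),
      one = (\<lambda>i\<in>I. \<one>\<^bsub>X i\<^esub>)\<rparr>"

definition inv_lim_topology ::
  "'i set \<Rightarrow> ('i \<Rightarrow> 'i \<Rightarrow> bool) \<Rightarrow> ('i \<Rightarrow> 'a monoid) \<Rightarrow> ('i \<Rightarrow> 'i \<Rightarrow> 'a \<Rightarrow> 'a) \<Rightarrow> ('i \<Rightarrow> 'a) topology" where
  "inv_lim_topology I leq X \<phi> =
     subtopology (product_topology (\<lambda>i. discrete_topology (carrier (X i))) I)
                 (inv_lim_carrier I leq X \<phi>)"

(* Index sets range over sets of subsets of the group's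
  element type, and the finite cyclic groups are represented on int (no loss up to iso). *)
definition procyclic :: "('a, 'c) monoid_scheme \<Rightarrow> 'a topology \<Rightarrow> bool" where
  "procyclic G T \<longleftrightarrow>
     (\<exists>(I :: 'a set set) leq (X :: 'a set \<Rightarrow> int monoid) \<phi>.
        inverse_system I leq X \<phi> \<and>
        (\<forall>i\<in>I. finite (carrier (X i)) \<and> cyclic_group (X i)) \<and>
        top_group_iso G T (inv_lim I leq X \<phi>) (inv_lim_topology I leq X \<phi>))"

end

theory Submission
  imports Defs "HOL-Algebra.Product_Groups" "HOL-Algebra.Weak_Morphisms"
begin

text \<open>Call \<open>q > 0\<close> a modulus of \<open>d\<close> if every shift \<open>\<sigma>\<^sup>j d\<close> close enough to \<open>d\<close> has \<open>q dvd j\<close>.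
  Then an orbit point \<open>\<sigma>\<^sup>k d\<close> close to \<open>x \<in> hull(d)\<close> determines \<open>k mod q\<close> independently of
  the choice, which gives locally constant residue maps \<open>hull(d) \<rightarrow> \<int>/q\<close>, compatible under
  divisibility. Limit-periodicity makes the moduli rich: for every \<open>\<epsilon>\<close> some modulus \<open>q\<close> has
  \<open>dist (\<sigma>\<^sup>j d) d < \<epsilon>\<close> for all multiples \<open>j\<close> of \<open>q\<close>. Hence the residues separate points,
  and by compactness of the hull every compatible family of residues is attained, so the
  residue maps form a homeomorphism of \<open>hull(d)\<close> onto the inverse limit of the groups \<open>\<int>/q\<close>
  over the moduli ordered by divisibility. Transporting the group structure of the inverse
  limit gives a hull group; conversely, in any hull group the residue maps are additive,
  because they are additive on the dense orbit and the multiplication is continuous.\<close>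

lemma shiftp_apply [simp]: "apply_bcontfun (shiftp k f) n = apply_bcontfun f (n + k)"
  by (simp add: shiftp.rep_eq)

lemma shiftp_shiftp [simp]: "shiftp j (shiftp k f) = shiftp (j + k) f"
  by (rule bcontfun_eqI) (simp add: ac_simps)

lemma shiftp_0 [simp]: "shiftp 0 f = f"
  by (rule bcontfun_eqI) simp

lemma dist_shiftp [simp]: "dist (shiftp k f) (shiftp k g) = dist f g"
proof -
  have le: "dist (shiftp k f) (shiftp k g) \<le> dist f g" for k f g
    by (rule dist_bound) (simp add: dist_bounded)
  have "dist f g = dist (shiftp (- k) (shiftp k f)) (shiftp (- k) (shiftp k g))"
    by simp
  also have "\<dots> \<le> dist (shiftp k f) (shiftp k g)"
    by (rule le)
  finally show ?thesis
    using le[of k f g] by simp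
qed

lemma dist_shiftp_shiftp: "dist (shiftp j f) (shiftp k f) = dist (shiftp (j - k) f) f"
  using dist_shiftp[of "- k" "shiftp j f" "shiftp k f"] by simp

lemma dist_shiftp_add_le: "dist (shiftp (j + k) f) f \<le> dist (shiftp j f) f + dist (shiftp k f) f"
  using dist_triangle[of "shiftp (j + k) f" f "shiftp j f"] dist_shiftp_shiftp[of "j + k" f j]
  by simp

lemma dist_shiftp_uminus: "dist (shiftp (- k) f) f = dist (shiftp k f) f"
  using dist_shiftp_shiftp[of 0 f k] by (simp add: dist_commute)

lemma dist_shiftp_diff_le: "dist (shiftp (j - k) f) f \<le> dist (shiftp j f) f + dist (shiftp k f) f"
  using dist_shiftp_add_le[of j "- k" f] by (simp add: dist_shiftp_uminus)

lemma periodic_pot_obtains_period: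
  assumes "periodic_pot p"
  obtains N where "N > 0" "shiftp N p = p"
proof -
  have "\<not> inj (\<lambda>k. shiftp k p)"
    using assms infinite_UNIV_int finite_imageD unfolding periodic_pot_def by blast
  then obtain j k where jk: "j \<noteq> k" "shiftp j p = shiftp k p"
    unfolding inj_def by blast
  have period: "shiftp (a - b) p = p" if "shiftp a p = shiftp b p" for a b
    using arg_cong[OF that, of "shiftp (- b)"] by simp
  show thesis
  proof (cases "j < k")
    case True
    then show thesis using that[of "k - j"] period[of k j] jk by simp
  next
    case False
    then show thesis using that[of "j - k"] period[of j k] jk by simp
  qed
qed

lemma shiftp_period_multiple:
  assumes "shiftp N p = p"
  shows "shiftp (m * N) p = p"
proof (induction m rule: int_induct[where k = 0])
  case base
  then show ?case by simp
next
  case (step1 i)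
  have "shiftp ((i + 1) * N) p = shiftp (i * N) (shiftp N p)"
    by (simp add: algebra_simps)
  with step1 assms show ?case by simp
next
  case (step2 i)
  have "shiftp ((i - 1) * N) p = shiftp (- N) (shiftp (i * N) p)"
    by (simp add: algebra_simps)
  also have "\<dots> = shiftp (- N) (shiftp N p)"
    using step2 assms by simp
  finally show ?case by simp
qed

lemma limit_periodic_obtains_almost_period:
  assumes "limit_periodic d" "e > 0"
  obtains N where "N > 0" "\<And>m. dist (shiftp (m * N) d) d < e"
proof -
  obtain p where p: "periodic_pot p" "dist p d < e / 2"
    using assms unfolding limit_periodic_def closure_approachable
    by (metis half_gt_zero mem_Collect_eq)
  obtain N where N: "N > 0" "shiftp N p = p"
    using periodic_pot_obtains_period[OF p(1)] .
  have "dist (shiftp (m * N) d) d < e" for m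
  proof -
    have "dist (shiftp (m * N) d) d
          \<le> dist (shiftp (m * N) d) (shiftp (m * N) p) + dist (shiftp (m * N) p) d"
      by (rule dist_triangle)
    also have "dist (shiftp (m * N) d) (shiftp (m * N) p) = dist d p"
      by simp
    also have "shiftp (m * N) p = p"
      by (rule shiftp_period_multiple[OF N(2)])
    finally show ?thesis
      using p(2) by (simp add: dist_commute)
  qed
  with N(1) show thesis using that by blast
qed

lemma shiftp_in_pot_hull: "shiftp k d \<in> pot_hull d"
  unfolding pot_hull_def by (rule closure_subset[THEN subsetD]) auto

lemma closed_pot_hull: "closed (pot_hull d)"
  by (simp add: pot_hull_def)

lemma pot_hull_obtains_approx:
  assumes "x \<in> pot_hull d" "e > 0"
  obtains k where "dist x (shiftp k d) < e"
  using assms unfolding pot_hull_def closure_approachable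
  by (metis (no_types, lifting) dist_commute imageE)

text \<open>The library's \<open>complete_space\<close> instance for \<open>bcontfun\<close> needs a metric domain, and \<open>int\<close>
  is only a discrete topological space.\<close>

lemma complete_UNIV_potential: "complete (UNIV :: potential set)"
proof (rule completeI)
  fix f :: "nat \<Rightarrow> potential"
  assume "Cauchy f"
  then obtain g where "uniform_limit UNIV f g sequentially"
    using uniformly_convergent_eq_cauchy[of "\<lambda>_. True" f]
    unfolding Cauchy_def uniform_limit_sequentially_iff
    by (metis dist_fun_lt_imp_dist_val_lt)
  then obtain l where "f \<longlonglongrightarrow> l"
    using uniform_limit_bcontfunE sequentially_bot by metis
  then show "\<exists>l\<in>UNIV. f \<longlonglongrightarrow> l"
    by blast
qed

lemma compact_pot_hull:
  assumes "limit_periodic d"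
  shows "compact (pot_hull d)"
  unfolding compact_eq_totally_bounded
proof (intro conjI allI impI)
  show "complete (pot_hull d)"
    by (rule complete_closed_subset[OF closed_pot_hull subset_UNIV complete_UNIV_potential])
  fix e :: real
  assume "e > 0"
  then obtain N where N: "N > 0" "\<And>m. dist (shiftp (m * N) d) d < e / 2"
    using limit_periodic_obtains_almost_period[OF assms, of "e / 2"] by auto
  have "pot_hull d \<subseteq> (\<Union>a\<in>{0..<N}. ball (shiftp a d) e)"
  proof
    fix x
    assume "x \<in> pot_hull d"
    then obtain j where j: "dist x (shiftp j d) < e / 2"
      using pot_hull_obtains_approx \<open>e > 0\<close> half_gt_zero by blast
    have "dist (shiftp j d) (shiftp (j mod N) d) = dist (shiftp (j div N * N) d) d"
      by (simp add: dist_shiftp_shiftp minus_mod_eq_div_mult)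
    then have "dist (shiftp (j mod N) d) x < e"
      using N(2)[of "j div N"] j dist_triangle[of "shiftp (j mod N) d" x "shiftp j d"]
      by (simp add: dist_commute)
    moreover have "j mod N \<in> {0..<N}"
      using N(1) by simp
    ultimately show "x \<in> (\<Union>a\<in>{0..<N}. ball (shiftp a d) e)"
      by auto
  qed
  then show "\<exists>k. finite k \<and> pot_hull d \<subseteq> (\<Union>x\<in>k. ball x e)"
    by (intro exI[of _ "(\<lambda>a. shiftp a d) ` {0..<N}"]) auto
qed

lemma diff_closed_int_set_mult_mem:
  fixes A :: "int set"
  assumes "q \<in> A" and diff: "\<And>j k. j \<in> A \<Longrightarrow> k \<in> A \<Longrightarrow> j - k \<in> A"
  shows "c * q \<in> A"
proof -
  have zero: "0 \<in> A"
    using diff[OF assms(1) assms(1)] by simp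
  have neg: "- q \<in> A"
    using diff[OF zero assms(1)] by simp
  show ?thesis
  proof (induction c rule: int_induct[where k = 0])
    case (step1 i)
    have "(i + 1) * q = i * q - - q"
      by (simp add: algebra_simps)
    with diff[OF step1(2) neg] show ?case
      by simp
  next
    case (step2 i)
    have "(i - 1) * q = i * q - q"
      by (simp add: algebra_simps)
    with diff[OF step2(2) assms(1)] show ?case
      by simp
  qed (simp add: zero)
qed

lemma int_subgroup_obtains_generator:
  fixes A :: "int set"
  assumes "N \<in> A" "N > 0" and diff: "\<And>j k. j \<in> A \<Longrightarrow> k \<in> A \<Longrightarrow> j - k \<in> A"
  obtains q where "q > 0" "A = {j. q dvd j}"
proof -
  note multiple = diff_closed_int_set_mult_mem[OF _ diff]
  define q where "q = int (LEAST n. 0 < n \<and> int n \<in> A)"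
  have "0 < (LEAST n. 0 < n \<and> int n \<in> A) \<and> int (LEAST n. 0 < n \<and> int n \<in> A) \<in> A"
    by (rule LeastI[of _ "nat N"]) (use assms in simp)
  then have q: "q > 0" "q \<in> A"
    by (simp_all add: q_def)
  have q_least: "q \<le> int n" if "0 < n" "int n \<in> A" for n
    unfolding q_def using Least_le[of "\<lambda>n. 0 < n \<and> int n \<in> A" n] that by simp
  have "q dvd j" if "j \<in> A" for j
  proof (rule ccontr)
    assume "\<not> q dvd j"
    then have "j mod q \<noteq> 0"
      by (simp add: dvd_eq_mod_eq_0)
    moreover have "0 \<le> j mod q"
      using q(1) by simp
    ultimately have "0 < nat (j mod q)"
      by linarith
    moreover have "int (nat (j mod q)) \<in> A"
      using diff[OF that multiple[OF q(2), of "j div q"]] q(1)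
      by (simp add: minus_div_mult_eq_mod)
    ultimately have "q \<le> int (nat (j mod q))"
      by (rule q_least)
    then have "q \<le> j mod q"
      using q(1) by simp
    then show False
      using pos_mod_bound[OF q(1), of j] by linarith
  qed
  moreover have "j \<in> A" if "q dvd j" for j
    using that multiple[OF q(2)] by (auto simp: mult.commute)
  ultimately show thesis
    using that q(1) by blast
qed

lemma finite_obtains_uniform_lower_bound:
  fixes f :: "'a \<Rightarrow> 'b \<Rightarrow> real"
  assumes "finite S" and "\<And>x. x \<in> S \<Longrightarrow> \<exists>\<eta>>0. \<forall>y. \<eta> \<le> f x y"
  obtains \<eta> where "\<eta> > 0" "\<And>x y. x \<in> S \<Longrightarrow> \<eta> \<le> f x y"
proof -
  obtain \<eta> where \<eta>: "\<And>x. x \<in> S \<Longrightarrow> \<eta> x > 0 \<and> (\<forall>y. \<eta> x \<le> f x y)"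
    using assms(2) by metis
  define \<delta> where "\<delta> = Min (insert 1 (\<eta> ` S))"
  have "\<delta> > 0"
    using assms(1) \<eta> by (simp add: \<delta>_def)
  moreover have "\<delta> \<le> f x y" if "x \<in> S" for x y
  proof -
    have "\<delta> \<le> \<eta> x"
      unfolding \<delta>_def using assms(1) that by (intro Min_le) auto
    also have "\<eta> x \<le> f x y"
      using \<eta>[OF that] by blast
    finally show ?thesis .
  qed
  ultimately show thesis
    using that by blast
qed

lemma continuous_map_discrete_topology_locally_constant:
  fixes f :: "'a::metric_space \<Rightarrow> 'b"
  assumes "f \<in> S \<rightarrow> U" and "\<And>x. x \<in> S \<Longrightarrow> \<exists>e>0. \<forall>y\<in>S. dist y x < e \<longrightarrow> f y = f x"
  shows "continuous_map (top_of_set S) (discrete_topology U) f"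
  unfolding continuous_map_openin_preimage_eq
proof (intro conjI allI impI)
  show "f \<in> topspace (top_of_set S) \<rightarrow> topspace (discrete_topology U)"
    using assms(1) by simp
  fix V
  show "openin (top_of_set S) (topspace (top_of_set S) \<inter> f -` V)"
    unfolding openin_euclidean_subtopology_iff
  proof (intro conjI ballI)
    fix x
    assume x: "x \<in> topspace (top_of_set S) \<inter> f -` V"
    then obtain e where e: "e > 0" "\<forall>y\<in>S. dist y x < e \<longrightarrow> f y = f x"
      using assms(2) by auto
    have "y \<in> topspace (top_of_set S) \<inter> f -` V" if "y \<in> S" "dist y x < e" for y
    proof -
      from e(2) that have "f y = f x"
        by blast
      with x that show ?thesis
        by simp
    qed
    with e(1) show "\<exists>e>0. \<forall>y\<in>S. dist y x < e \<longrightarrow> y \<in> topspace (top_of_set S) \<inter> f -` V"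
      by blast
  qed (simp add: Int_lower1)
qed

lemma inv_lim_eq_subgroup_product:
  "inv_lim I leq X \<phi> = (product_group I X)\<lparr>carrier := inv_lim_carrier I leq X \<phi>\<rparr>"
  by (simp add: inv_lim_def product_group_def)

lemma subgroup_inv_lim_carrier:
  assumes sys: "inverse_system I leq X \<phi>"
  shows "subgroup (inv_lim_carrier I leq X \<phi>) (product_group I X)"
proof -
  have grp: "\<And>i. i \<in> I \<Longrightarrow> group (X i)"
    using sys by (simp add: inverse_system_def)
  have hom: "group_hom (X j) (X i) (\<phi> i j)" if "i \<in> I" "j \<in> I" "leq i j" for i j
    using sys grp that unfolding inverse_system_def group_hom_def group_hom_axioms_def by blast
  have comp: "x j \<in> carrier (X j)" if "x \<in> inv_lim_carrier I leq X \<phi>" "j \<in> I" for x j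
    using that by (auto simp: inv_lim_carrier_def)
  show ?thesis
  proof (rule group.subgroupI[OF product_group[OF grp]])
    show "inv_lim_carrier I leq X \<phi> \<subseteq> carrier (product_group I X)"
      by (auto simp: inv_lim_carrier_def)
    show "inv_lim_carrier I leq X \<phi> \<noteq> {}"
      using grp group_hom.hom_one[OF hom] monoid.one_closed[OF group.is_monoid[OF grp]]
      by (auto simp: inv_lim_carrier_def intro!: exI[of _ "\<lambda>i\<in>I. \<one>\<^bsub>X i\<^esub>"])
  next
    fix x
    assume x: "x \<in> inv_lim_carrier I leq X \<phi>"
    then show "inv\<^bsub>product_group I X\<^esub> x \<in> inv_lim_carrier I leq X \<phi>"
      using grp group_hom.hom_inv[OF hom] comp[OF x]
      by (auto simp: inv_lim_carrier_def)
  next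
    fix x y
    assume x: "x \<in> inv_lim_carrier I leq X \<phi>" and y: "y \<in> inv_lim_carrier I leq X \<phi>"
    then show "x \<otimes>\<^bsub>product_group I X\<^esub> y \<in> inv_lim_carrier I leq X \<phi>"
      using grp group_hom.hom_mult[OF hom] comp[OF x] comp[OF y] monoid.m_closed[OF group.is_monoid[OF grp]]
      by (auto simp: inv_lim_carrier_def)
  qed
qed

lemma group_inv_lim:
  assumes "inverse_system I leq X \<phi>"
  shows "group (inv_lim I leq X \<phi>)"
proof -
  have "\<And>i. i \<in> I \<Longrightarrow> group (X i)"
    using assms by (simp add: inverse_system_def)
  then show ?thesis
    unfolding inv_lim_eq_subgroup_product
    by (intro subgroup.subgroup_is_group[OF subgroup_inv_lim_carrier[OF assms]] product_group)
qed

lemma inv_inv_lim: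
  assumes sys: "inverse_system I leq X \<phi>" and x: "x \<in> inv_lim_carrier I leq X \<phi>"
  shows "inv\<^bsub>inv_lim I leq X \<phi>\<^esub> x = (\<lambda>i\<in>I. inv\<^bsub>X i\<^esub> x i)"
proof -
  have grp: "\<And>i. i \<in> I \<Longrightarrow> group (X i)"
    using sys by (simp add: inverse_system_def)
  have "x \<in> (\<Pi>\<^sub>E i\<in>I. carrier (X i))"
    using x by (simp add: inv_lim_carrier_def)
  then show ?thesis
    unfolding inv_lim_eq_subgroup_product
    using group.m_inv_consistent[OF product_group[OF grp] subgroup_inv_lim_carrier[OF sys] x] grp
    by simp
qed

lemma topspace_inv_lim_topology [simp]:
  "topspace (inv_lim_topology I leq X \<phi>) = inv_lim_carrier I leq X \<phi>"
  by (auto simp: inv_lim_topology_def inv_lim_carrier_def)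

lemma continuous_map_inv_lim_component:
  assumes "i \<in> I"
  shows "continuous_map (inv_lim_topology I leq X \<phi>) (discrete_topology (carrier (X i))) (\<lambda>x. x i)"
  unfolding inv_lim_topology_def
  by (rule continuous_map_from_subtopology) (rule continuous_map_product_projection[OF assms])

lemma continuous_map_into_inv_lim:
  assumes "f \<in> topspace S \<rightarrow> inv_lim_carrier I leq X \<phi>"
    and "\<And>i. i \<in> I \<Longrightarrow> continuous_map S (discrete_topology (carrier (X i))) (\<lambda>x. f x i)"
  shows "continuous_map S (inv_lim_topology I leq X \<phi>) f"
  unfolding inv_lim_topology_def continuous_map_in_subtopology continuous_map_componentwise
  using assms by (auto simp: inv_lim_carrier_def PiE_iff)

lemma continuous_map_inv_lim_mult:
  assumes sys: "inverse_system I leq X \<phi>"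
  defines "T \<equiv> inv_lim_topology I leq X \<phi>"
  shows "continuous_map (prod_topology T T) T (\<lambda>(x, y). x \<otimes>\<^bsub>inv_lim I leq X \<phi>\<^esub> y)"
  unfolding T_def
proof (rule continuous_map_into_inv_lim)
  let ?L = "inv_lim I leq X \<phi>" and ?T = "inv_lim_topology I leq X \<phi>"
  have "carrier ?L = inv_lim_carrier I leq X \<phi>"
    by (simp add: inv_lim_def)
  then show "(\<lambda>(x, y). x \<otimes>\<^bsub>?L\<^esub> y) \<in> topspace (prod_topology ?T ?T) \<rightarrow> inv_lim_carrier I leq X \<phi>"
    using group.subgroup_self[OF group_inv_lim[OF sys]] by (auto intro: subgroup.m_closed)
  fix i
  assume i: "i \<in> I"
  then have grp: "group (X i)"
    using sys by (simp add: inverse_system_def)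
  have "continuous_map (prod_topology ?T ?T) (prod_topology (discrete_topology (carrier (X i)))
          (discrete_topology (carrier (X i)))) (\<lambda>z. (fst z i, snd z i))"
    by (intro continuous_map_pairedI
        continuous_map_compose[OF continuous_map_fst continuous_map_inv_lim_component[OF i], unfolded o_def]
        continuous_map_compose[OF continuous_map_snd continuous_map_inv_lim_component[OF i], unfolded o_def])
  moreover have "continuous_map (prod_topology (discrete_topology (carrier (X i)))
      (discrete_topology (carrier (X i)))) (discrete_topology (carrier (X i))) (\<lambda>(a, b). a \<otimes>\<^bsub>X i\<^esub> b)"
    unfolding prod_topology_discrete_topology[symmetric]
    using monoid.m_closed[OF group.is_monoid[OF grp]] by auto
  ultimately have "continuous_map (prod_topology ?T ?T) (discrete_topology (carrier (X i)))
      ((\<lambda>(a, b). a \<otimes>\<^bsub>X i\<^esub> b) \<circ> (\<lambda>z. (fst z i, snd z i)))"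
    by (rule continuous_map_compose)
  then show "continuous_map (prod_topology ?T ?T) (discrete_topology (carrier (X i)))
      (\<lambda>z. (case z of (x, y) \<Rightarrow> x \<otimes>\<^bsub>?L\<^esub> y) i)"
    by (rule continuous_map_eq) (use i in \<open>auto simp: inv_lim_def\<close>)
qed

lemma continuous_map_inv_lim_inv:
  assumes sys: "inverse_system I leq X \<phi>"
  defines "T \<equiv> inv_lim_topology I leq X \<phi>"
  shows "continuous_map T T (\<lambda>x. inv\<^bsub>inv_lim I leq X \<phi>\<^esub> x)"
  unfolding T_def
proof (rule continuous_map_into_inv_lim)
  let ?L = "inv_lim I leq X \<phi>" and ?T = "inv_lim_topology I leq X \<phi>"
  have "carrier ?L = inv_lim_carrier I leq X \<phi>"
    by (simp add: inv_lim_def)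
  then show "(\<lambda>x. inv\<^bsub>?L\<^esub> x) \<in> topspace ?T \<rightarrow> inv_lim_carrier I leq X \<phi>"
    using group.inv_closed[OF group_inv_lim[OF sys]] by auto
  fix i
  assume i: "i \<in> I"
  then have grp: "group (X i)"
    using sys by (simp add: inverse_system_def)
  have "continuous_map (discrete_topology (carrier (X i))) (discrete_topology (carrier (X i)))
      (\<lambda>a. inv\<^bsub>X i\<^esub> a)"
    using group.inv_closed[OF grp] by auto
  with continuous_map_inv_lim_component[OF i]
  have "continuous_map ?T (discrete_topology (carrier (X i))) ((\<lambda>a. inv\<^bsub>X i\<^esub> a) \<circ> (\<lambda>x. x i))"
    by (rule continuous_map_compose)
  then show "continuous_map ?T (discrete_topology (carrier (X i))) (\<lambda>x. (inv\<^bsub>?L\<^esub> x) i)"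
    by (rule continuous_map_eq) (use i in \<open>simp add: inv_inv_lim[OF sys]\<close>)
qed

lemma topological_group_inv_lim:
  assumes "inverse_system I leq X \<phi>"
  shows "topological_group (inv_lim I leq X \<phi>) (inv_lim_topology I leq X \<phi>)"
proof -
  have "topspace (inv_lim_topology I leq X \<phi>) = carrier (inv_lim I leq X \<phi>)"
    by (simp add: inv_lim_def)
  then show ?thesis
    unfolding topological_group_def
    using group_inv_lim[OF assms] continuous_map_inv_lim_mult[OF assms] continuous_map_inv_lim_inv[OF assms]
    by blast
qed

lemma topological_group_image_group:
  assumes L: "topological_group L T" and f: "homeomorphic_map T S f"
  shows "topological_group (image_group f L) S"
proof -
  let ?G = "image_group f L"
  obtain g where fg: "homeomorphic_maps T S f g"
    using f homeomorphic_map_maps by blast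
  have grp: "group L" and carrier_L: "topspace T = carrier L"
    and mult: "continuous_map (prod_topology T T) T (\<lambda>(x, y). x \<otimes>\<^bsub>L\<^esub> y)"
    and inv: "continuous_map T T (\<lambda>x. inv\<^bsub>L\<^esub> x)"
    using L by (auto simp: topological_group_def)
  have f_cont: "continuous_map T S f" and g_cont: "continuous_map S T g"
    and gf: "\<And>x. x \<in> carrier L \<Longrightarrow> g (f x) = x" and fg': "\<And>y. y \<in> topspace S \<Longrightarrow> f (g y) = y"
    using fg carrier_L by (auto simp: homeomorphic_maps_def)
  have g_in: "g y \<in> carrier L" if "y \<in> topspace S" for y
    using g_cont that carrier_L by (auto simp: continuous_map_def)
  have inj: "inj_on f (carrier L)"
    by (metis gf inj_onI)
  have carrier_G: "carrier ?G = topspace S"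
    using f carrier_L homeomorphic_imp_surjective_map by (simp add: image_group_carrier) blast
  have inv_into_f: "inv_into (carrier L) f y = g y" if "y \<in> topspace S" for y
    using inv_into_f_eq[OF inj g_in[OF that] fg'[OF that]] .
  have G: "group ?G"
    by (rule group.inj_imp_image_group_is_group[OF grp inj])
  have mult_G: "y \<otimes>\<^bsub>?G\<^esub> z = f (g y \<otimes>\<^bsub>L\<^esub> g z)" if "y \<in> topspace S" "z \<in> topspace S" for y z
    using that by (simp add: image_group_def inv_into_f)
  have hom: "group_hom L ?G f"
    using grp G inj_imp_image_group_iso[OF inj]
    by (simp add: group_hom_def group_hom_axioms_def iso_def)
  have inv_G: "inv\<^bsub>?G\<^esub> y = f (inv\<^bsub>L\<^esub> g y)" if "y \<in> topspace S" for y
    using group_hom.hom_inv[OF hom g_in[OF that]] fg'[OF that] by simp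
  have "continuous_map (prod_topology S S) S (f \<circ> ((\<lambda>(x, y). x \<otimes>\<^bsub>L\<^esub> y) \<circ> (\<lambda>z. (g (fst z), g (snd z)))))"
    by (intro continuous_map_compose[OF _ f_cont] continuous_map_compose[OF _ mult]
        continuous_map_pairedI continuous_map_compose[OF continuous_map_fst g_cont, unfolded o_def]
        continuous_map_compose[OF continuous_map_snd g_cont, unfolded o_def])
  then have "continuous_map (prod_topology S S) S (\<lambda>(x, y). x \<otimes>\<^bsub>?G\<^esub> y)"
    by (rule continuous_map_eq) (auto simp: mult_G)
  moreover have "continuous_map S S (f \<circ> ((\<lambda>x. inv\<^bsub>L\<^esub> x) \<circ> g))"
    by (intro continuous_map_compose[OF _ f_cont] continuous_map_compose[OF g_cont inv])
  then have "continuous_map S S (\<lambda>x. inv\<^bsub>?G\<^esub> x)"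
    by (rule continuous_map_eq) (simp add: inv_G)
  ultimately show ?thesis
    unfolding topological_group_def using G carrier_G by simp
qed

text \<open>The index sets in \<open>procyclic\<close> consist of sets of potentials, so the modulus \<open>q\<close> is
  encoded as the singleton of the constant potential \<open>q\<close>.\<close>

definition modulus_index :: "int \<Rightarrow> potential set" where
  "modulus_index q = {const_bcontfun (of_int q)}"

lemma inj_modulus_index: "inj modulus_index"
proof (rule injI)
  fix a b
  assume "modulus_index a = modulus_index b"
  then have "apply_bcontfun (const_bcontfun (of_int a) :: potential) 0
      = apply_bcontfun (const_bcontfun (of_int b) :: potential) 0"
    by (simp add: modulus_index_def)
  then show "a = b"
    by (simp add: const_bcontfun.rep_eq)
qed

definition index_modulus :: "potential set \<Rightarrow> int" where
  "index_modulus = inv_into UNIV modulus_index"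

lemma index_modulus_modulus_index [simp]: "index_modulus (modulus_index q) = q"
  by (simp add: index_modulus_def inv_into_f_f inj_modulus_index)

definition divides_index :: "potential set \<Rightarrow> potential set \<Rightarrow> bool" where
  "divides_index A B \<longleftrightarrow> index_modulus A dvd index_modulus B"

definition residue_group :: "potential set \<Rightarrow> int monoid" where
  "residue_group A = integer_mod_group (nat (index_modulus A))"

definition reduction :: "potential set \<Rightarrow> potential set \<Rightarrow> int \<Rightarrow> int" where
  "reduction A B x = x mod index_modulus A"

lemma carrier_residue_group:
  "q > 0 \<Longrightarrow> carrier (residue_group (modulus_index q)) = {0..<q}"
  by (simp add: residue_group_def carrier_integer_mod_group)

lemma mult_residue_group:
  "q > 0 \<Longrightarrow> x \<otimes>\<^bsub>residue_group (modulus_index q)\<^esub> y = (x + y) mod q"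
  by (simp add: residue_group_def)

lemma one_residue_group [simp]: "\<one>\<^bsub>residue_group A\<^esub> = 0"
  by (simp add: residue_group_def)

lemma group_residue_group [simp]: "group (residue_group A)"
  by (simp add: residue_group_def)

lemma cyclic_residue_group:
  assumes "q > 0"
  shows "cyclic_group (residue_group (modulus_index q))"
proof -
  let ?Z = "residue_group (modulus_index q)"
  have "(1 mod q) [^]\<^bsub>?Z\<^esub> m = m mod q" for m :: int
    using assms by (simp add: residue_group_def int_pow_integer_mod_group mod_mult_right_eq)
  moreover have "range (\<lambda>m::int. m mod q) = {0..<q}"
  proof
    show "range (\<lambda>m. m mod q) \<subseteq> {0..<q}"
      using assms by auto
    show "{0..<q} \<subseteq> range (\<lambda>m. m mod q)"
    proof
      fix r
      assume "r \<in> {0..<q}"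
      then have "r = r mod q"
        by simp
      then show "r \<in> range (\<lambda>m. m mod q)"
        by blast
    qed
  qed
  ultimately have "carrier ?Z = range (\<lambda>m::int. (1 mod q) [^]\<^bsub>?Z\<^esub> m)"
    using assms by (simp add: carrier_residue_group)
  moreover have "1 mod q \<in> carrier ?Z"
    using assms by (simp add: carrier_residue_group)
  ultimately show ?thesis
    using group.cyclic_group[OF group_residue_group] by blast
qed

lemma inverse_system_residue_groups:
  assumes "Q \<noteq> {}" and pos: "\<And>q. q \<in> Q \<Longrightarrow> q > 0"
    and lcm: "\<And>a b. a \<in> Q \<Longrightarrow> b \<in> Q \<Longrightarrow> lcm a b \<in> Q"
  shows "inverse_system (modulus_index ` Q) divides_index residue_group reduction"
  unfolding inverse_system_def
proof (intro conjI)
  show "\<forall>i\<in>modulus_index ` Q. \<forall>j\<in>modulus_index ` Q. \<exists>k\<in>modulus_index ` Q.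
      divides_index i k \<and> divides_index j k"
  proof (intro ballI)
    fix i j
    assume "i \<in> modulus_index ` Q" "j \<in> modulus_index ` Q"
    then obtain a b where "a \<in> Q" "b \<in> Q" "i = modulus_index a" "j = modulus_index b"
      by blast
    then show "\<exists>k\<in>modulus_index ` Q. divides_index i k \<and> divides_index j k"
      using lcm by (intro bexI[of _ "modulus_index (lcm a b)"]) (auto simp: divides_index_def)
  qed
  show "\<forall>i\<in>modulus_index ` Q. \<forall>j\<in>modulus_index ` Q. divides_index i j \<longrightarrow>
      reduction i j \<in> hom (residue_group j) (residue_group i)"
    using pos unfolding hom_def
    by (auto simp: divides_index_def reduction_def carrier_residue_group mult_residue_group
        mod_mod_cancel mod_add_eq)
qed (use assms in \<open>auto simp: divides_index_def reduction_def carrier_residue_group mod_mod_cancel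
      dest: dvd_trans\<close>)

text \<open>Continuity of the multiplication moves \<open>x \<otimes> y\<close> close to
  \<open>\<sigma>\<^sup>k d \<otimes> \<sigma>\<^sup>l d = \<sigma>\<^sup>k\<^sup>+\<^sup>l d\<close> for orbit points near \<open>x\<close> and \<open>y\<close>.\<close>

lemma hull_group_obtains_orbit_approx:
  assumes G: "hull_group d G" and x: "x \<in> pot_hull d" and y: "y \<in> pot_hull d" and "e > 0"
  obtains k l where "dist x (shiftp k d) < e" "dist y (shiftp l d) < e"
    "dist (x \<otimes>\<^bsub>G\<^esub> y) (shiftp (k + l) d) < e"
proof -
  from G have shift: "\<And>j k. shiftp (j + k) d = shiftp j d \<otimes>\<^bsub>G\<^esub> shiftp k d"
    and "topological_group G (top_of_set (pot_hull d))"
    unfolding hull_group_def by blast+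
  then have "continuous_map (prod_topology (top_of_set (pot_hull d)) (top_of_set (pot_hull d)))
      (top_of_set (pot_hull d)) (\<lambda>(x, y). x \<otimes>\<^bsub>G\<^esub> y)"
    unfolding topological_group_def by blast
  then have cont: "continuous_on (pot_hull d \<times> pot_hull d) (\<lambda>(x, y). x \<otimes>\<^bsub>G\<^esub> y)"
    unfolding prod_topology_subtopology_eu continuous_map_in_subtopology continuous_map_iff_continuous
    by blast
  obtain \<eta> where \<eta>: "\<eta> > 0" "\<And>z. z \<in> pot_hull d \<times> pot_hull d \<Longrightarrow> dist z (x, y) < \<eta> \<Longrightarrow>
      dist ((\<lambda>(x, y). x \<otimes>\<^bsub>G\<^esub> y) z) (x \<otimes>\<^bsub>G\<^esub> y) < e"
    using cont[unfolded continuous_on_iff, rule_format, of "(x, y)" e] x y \<open>e > 0\<close>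
    by auto
  define r where "r = min (\<eta> / 2) e"
  have r: "r > 0"
    using \<eta>(1) \<open>e > 0\<close> by (simp add: r_def)
  obtain k where k: "dist x (shiftp k d) < r"
    using pot_hull_obtains_approx[OF x r] by blast
  obtain l where l: "dist y (shiftp l d) < r"
    using pot_hull_obtains_approx[OF y r] by blast
  have "dist (shiftp k d, shiftp l d) (x, y) \<le> dist (shiftp k d) x + dist (shiftp l d) y"
    by (simp add: dist_Pair_Pair sqrt_sum_squares_le_sum)
  also have "\<dots> < \<eta>"
    using k l by (simp add: r_def dist_commute)
  finally have "dist (shiftp k d, shiftp l d) (x, y) < \<eta>" .
  then have "dist (shiftp k d \<otimes>\<^bsub>G\<^esub> shiftp l d) (x \<otimes>\<^bsub>G\<^esub> y) < e"
    using \<eta>(2)[of "(shiftp k d, shiftp l d)"] shiftp_in_pot_hull by simp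
  then have "dist (x \<otimes>\<^bsub>G\<^esub> y) (shiftp (k + l) d) < e"
    using shift[of k l] by (simp add: dist_commute)
  moreover have "dist x (shiftp k d) < e" "dist y (shiftp l d) < e"
    using k l by (simp_all add: r_def)
  ultimately show thesis
    using that by blast
qed

locale limit_periodic_potential =
  fixes d :: potential
  assumes limit_periodic: "limit_periodic d"
begin

abbreviation drift :: "int \<Rightarrow> real" where
  "drift k \<equiv> dist (shiftp k d) d"

definition moduli :: "int set" where
  "moduli = {q. q > 0 \<and> (\<exists>r>0. \<forall>j. drift j < r \<longrightarrow> q dvd j)}"

definition modulus_radius :: "int \<Rightarrow> real" where
  "modulus_radius q = (SOME r. r > 0 \<and> (\<forall>j. drift j < r \<longrightarrow> q dvd j))"

text \<open>Two orbit points within \<open>modulus_radius q / 2\<close> of \<open>x\<close> differ by a multiple of \<open>q\<close>, so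
  the choice made by \<open>SOME\<close> does not affect \<open>residue q x\<close>.\<close>

definition residue :: "int \<Rightarrow> potential \<Rightarrow> int" where
  "residue q x = (SOME k. dist x (shiftp k d) < modulus_radius q / 2) mod q"

lemma moduli_pos: "q \<in> moduli \<Longrightarrow> q > 0"
  by (simp add: moduli_def)

lemma
  assumes "q \<in> moduli"
  shows modulus_radius_pos: "modulus_radius q > 0"
    and modulus_radius_dvd: "drift j < modulus_radius q \<Longrightarrow> q dvd j"
proof -
  have "\<exists>r. r > 0 \<and> (\<forall>j. drift j < r \<longrightarrow> q dvd j)"
    using assms by (auto simp: moduli_def)
  from someI_ex[OF this] show "modulus_radius q > 0" "drift j < modulus_radius q \<Longrightarrow> q dvd j"
    unfolding modulus_radius_def by blast+
qed

lemma residue_eq: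
  assumes "q \<in> moduli" "x \<in> pot_hull d" "dist x (shiftp k d) < modulus_radius q / 2"
  shows "residue q x = k mod q"
proof -
  define k0 where "k0 = (SOME k. dist x (shiftp k d) < modulus_radius q / 2)"
  have "\<exists>k. dist x (shiftp k d) < modulus_radius q / 2"
    using assms(3) by blast
  then have k0: "dist x (shiftp k0 d) < modulus_radius q / 2"
    unfolding k0_def by (rule someI_ex)
  have "drift (k0 - k) = dist (shiftp k0 d) (shiftp k d)"
    by (simp add: dist_shiftp_shiftp)
  also have "\<dots> < modulus_radius q"
    using dist_triangle[of "shiftp k0 d" "shiftp k d" x] k0 assms(3) by (simp add: dist_commute)
  finally have "q dvd k0 - k"
    by (rule modulus_radius_dvd[OF assms(1)])
  then show ?thesis
    unfolding residue_def k0_def[symmetric] by (simp add: mod_eq_dvd_iff)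
qed

lemma residue_shiftp:
  assumes "q \<in> moduli"
  shows "residue q (shiftp k d) = k mod q"
  by (rule residue_eq[OF assms shiftp_in_pot_hull]) (simp add: modulus_radius_pos[OF assms])

lemma residue_range:
  assumes "q \<in> moduli"
  shows "residue q x \<in> {0..<q}"
  using moduli_pos[OF assms] by (simp add: residue_def)

lemma residue_locally_constant:
  assumes "q \<in> moduli" "x \<in> pot_hull d" "y \<in> pot_hull d" "dist y x < modulus_radius q / 4"
  shows "residue q y = residue q x"
proof -
  have "modulus_radius q / 4 > 0"
    using modulus_radius_pos[OF assms(1)] by simp
  then obtain k where k: "dist x (shiftp k d) < modulus_radius q / 4"
    using pot_hull_obtains_approx[OF assms(2)] by blast
  then have "dist y (shiftp k d) < modulus_radius q / 2"
    using dist_triangle[of y "shiftp k d" x] assms(4) by simp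
  then have "residue q y = k mod q"
    by (rule residue_eq[OF assms(1,3)])
  moreover have "residue q x = k mod q"
    using k \<open>modulus_radius q / 4 > 0\<close> by (intro residue_eq[OF assms(1,2)]) simp
  ultimately show ?thesis
    by simp
qed

lemma residue_mod_dvd:
  assumes "a \<in> moduli" "b \<in> moduli" "a dvd b" "x \<in> pot_hull d"
  shows "residue b x mod a = residue a x"
proof -
  have "min (modulus_radius a) (modulus_radius b) / 2 > 0"
    using modulus_radius_pos[OF assms(1)] modulus_radius_pos[OF assms(2)] by simp
  then obtain k where "dist x (shiftp k d) < min (modulus_radius a) (modulus_radius b) / 2"
    using pot_hull_obtains_approx[OF assms(4)] by blast
  then have "residue a x = k mod a" "residue b x = k mod b"
    using residue_eq assms by auto
  then show ?thesis
    using assms(3) by (simp add: mod_mod_cancel)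
qed

lemma one_mem_moduli: "1 \<in> moduli"
  unfolding moduli_def by (auto intro: exI[of _ 1])

lemma lcm_mem_moduli:
  assumes "a \<in> moduli" "b \<in> moduli"
  shows "lcm a b \<in> moduli"
proof -
  have "\<forall>j. drift j < min (modulus_radius a) (modulus_radius b) \<longrightarrow> lcm a b dvd j"
    using modulus_radius_dvd[OF assms(1)] modulus_radius_dvd[OF assms(2)] by (auto intro: lcm_least)
  moreover have "min (modulus_radius a) (modulus_radius b) > 0"
    using modulus_radius_pos assms by simp
  moreover have "lcm a b > 0"
    using moduli_pos[OF assms(1)] moduli_pos[OF assms(2)] by (simp add: lcm_pos_int)
  ultimately show ?thesis
    unfolding moduli_def by blast
qed

lemma moduli_common_multiple:
  assumes "finite S" "S \<subseteq> moduli"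
  shows "\<exists>q\<in>moduli. \<forall>a\<in>S. a dvd q"
  using assms
proof (induction S rule: finite_induct)
  case empty
  then show ?case
    using one_mem_moduli by blast
next
  case (insert a S)
  then obtain q where "q \<in> moduli" "\<forall>b\<in>S. b dvd q"
    by auto
  then show ?case
    using insert.prems lcm_mem_moduli[of a q] by (auto intro!: bexI[of _ "lcm a q"] intro: dvd_trans)
qed

definition returns :: "int \<Rightarrow> int set" where
  "returns N = {j. \<forall>\<eta>>0. \<exists>m. drift (j + m * N) < \<eta>}"

lemma diff_mem_returns:
  assumes "j \<in> returns N" "k \<in> returns N"
  shows "j - k \<in> returns N"
  unfolding returns_def
proof (intro CollectI allI impI)
  fix \<eta> :: real
  assume "\<eta> > 0"
  then obtain m1 m2 where m: "drift (j + m1 * N) < \<eta> / 2" "drift (k + m2 * N) < \<eta> / 2"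
    using assms half_gt_zero[OF \<open>\<eta> > 0\<close>] unfolding returns_def by blast
  have "drift (j - k + (m1 - m2) * N) = drift ((j + m1 * N) - (k + m2 * N))"
    by (simp add: algebra_simps)
  also have "\<dots> \<le> drift (j + m1 * N) + drift (k + m2 * N)"
    by (rule dist_shiftp_diff_le)
  finally show "\<exists>m. drift (j - k + m * N) < \<eta>"
    using m by (intro exI[of _ "m1 - m2"]) linarith
qed

lemma period_mem_returns: "N \<in> returns N"
  unfolding returns_def by (auto intro: exI[of _ "-1"])

lemma returns_obtains_drift_gap:
  assumes "N > 0"
  obtains \<delta> where "\<delta> > 0" "\<And>r m. r \<in> {0..<N} - returns N \<Longrightarrow> \<delta> \<le> drift (r + m * N)"
proof (rule finite_obtains_uniform_lower_bound[of "{0..<N} - returns N" "\<lambda>r m. drift (r + m * N)"])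
  show "finite ({0..<N} - returns N)"
    by simp
  show "\<exists>\<eta>>0. \<forall>m. \<eta> \<le> drift (r + m * N)" if "r \<in> {0..<N} - returns N" for r
    using that unfolding returns_def by (auto simp: not_less)
qed blast

text \<open>The returns along \<open>j + N\<int>\<close> form a subgroup \<open>q\<int>\<close> containing \<open>N\<close>; since it is
  \<open>N\<close>-periodic, the drift off it is bounded below by a minimum over finitely many residues,
  so \<open>q\<close> is a modulus.\<close>

lemma obtains_modulus_with_small_multiples:
  assumes "e > 0"
  obtains q where "q \<in> moduli" "\<And>j. q dvd j \<Longrightarrow> drift j < e"
proof -
  obtain N where N: "N > 0" "\<And>m. drift (m * N) < e / 2"
    using limit_periodic_obtains_almost_period[OF limit_periodic, of "e / 2"] assms by auto
  obtain q where q: "q > 0" "returns N = {j. q dvd j}"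
    by (rule int_subgroup_obtains_generator[OF period_mem_returns N(1) diff_mem_returns])
  obtain \<delta> where \<delta>: "\<delta> > 0" "\<And>r m. r \<in> {0..<N} - returns N \<Longrightarrow> \<delta> \<le> drift (r + m * N)"
    using returns_obtains_drift_gap[OF N(1)] by blast
  have small_drift_dvd: "q dvd j" if "drift j < \<delta>" for j
  proof (rule ccontr)
    assume "\<not> q dvd j"
    moreover have "q dvd N"
      using period_mem_returns q(2) by blast
    ultimately have "j mod N \<in> {0..<N} - returns N"
      using q(2) N(1) by (simp add: dvd_mod_iff)
    then have "\<delta> \<le> drift (j mod N + j div N * N)"
      by (rule \<delta>(2))
    with that show False
      by simp
  qed
  have "q \<in> moduli"
    unfolding moduli_def using q(1) \<delta>(1) small_drift_dvd by (intro CollectI conjI exI[of _ \<delta>]) auto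
  moreover have "drift j < e" if "q dvd j" for j
  proof -
    have "j \<in> returns N"
      using that q(2) by simp
    then obtain m where "drift (j + m * N) < e / 2"
      using half_gt_zero[OF assms] unfolding returns_def by blast
    then show ?thesis
      using dist_shiftp_diff_le[of "j + m * N" "m * N" d] N(2)[of m] by simp
  qed
  ultimately show thesis
    by (rule that)
qed

lemma residues_separate:
  assumes "x \<in> pot_hull d" "y \<in> pot_hull d" "\<And>q. q \<in> moduli \<Longrightarrow> residue q x = residue q y"
  shows "x = y"
proof (rule ccontr)
  assume "x \<noteq> y"
  define e where "e = dist x y / 3"
  have e: "e > 0"
    using \<open>x \<noteq> y\<close> by (simp add: e_def)
  obtain q where q: "q \<in> moduli" "\<And>j. q dvd j \<Longrightarrow> drift j < e"
    using obtains_modulus_with_small_multiples[OF e] by blast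
  have r: "min (modulus_radius q / 2) e > 0"
    using modulus_radius_pos[OF q(1)] e by simp
  obtain k where k: "dist x (shiftp k d) < min (modulus_radius q / 2) e"
    using pot_hull_obtains_approx[OF assms(1) r] by blast
  obtain l where l: "dist y (shiftp l d) < min (modulus_radius q / 2) e"
    using pot_hull_obtains_approx[OF assms(2) r] by blast
  have "residue q x = k mod q" "residue q y = l mod q"
    using k l by (auto intro: residue_eq[OF q(1) assms(1)] residue_eq[OF q(1) assms(2)])
  then have "k mod q = l mod q"
    using assms(3)[OF q(1)] by simp
  then have "dist (shiftp k d) (shiftp l d) < e"
    using q(2) by (simp add: dist_shiftp_shiftp mod_eq_dvd_iff)
  then have "dist x y < 3 * e"
    using dist_triangle[of x y "shiftp k d"] dist_triangle[of "shiftp k d" y "shiftp l d"] k l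
    by (simp add: dist_commute)
  then show False
    by (simp add: e_def)
qed

lemma continuous_map_residue:
  assumes "q \<in> moduli"
  shows "continuous_map (top_of_set (pot_hull d)) (discrete_topology {0..<q}) (residue q)"
proof (rule continuous_map_discrete_topology_locally_constant)
  show "residue q \<in> pot_hull d \<rightarrow> {0..<q}"
    using residue_range[OF assms] by blast
  show "\<exists>e>0. \<forall>y\<in>pot_hull d. dist y x < e \<longrightarrow> residue q y = residue q x" if "x \<in> pot_hull d" for x
    using residue_locally_constant[OF assms that] modulus_radius_pos[OF assms]
    by (intro exI[of _ "modulus_radius q / 4"]) simp
qed

lemma closed_residue_fibre:
  assumes "q \<in> moduli"
  shows "closed {x \<in> pot_hull d. residue q x = r}"
proof -
  have "closedin (top_of_set (pot_hull d))
      {x \<in> topspace (top_of_set (pot_hull d)). residue q x \<in> {r} \<inter> {0..<q}}"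
    by (rule closedin_continuous_map_preimage[OF continuous_map_residue[OF assms]]) simp
  moreover have "{x \<in> topspace (top_of_set (pot_hull d)). residue q x \<in> {r} \<inter> {0..<q}}
      = {x \<in> pot_hull d. residue q x = r}"
    using residue_range[OF assms] by auto
  ultimately show ?thesis
    using closedin_closed_trans closed_pot_hull by metis
qed

lemma obtains_point_with_residues:
  assumes "\<And>a b. a \<in> moduli \<Longrightarrow> b \<in> moduli \<Longrightarrow> a dvd b \<Longrightarrow> t b mod a = t a"
  obtains x where "x \<in> pot_hull d" "\<And>q. q \<in> moduli \<Longrightarrow> residue q x = t q"
proof -
  have "pot_hull d \<inter> (\<Inter>q\<in>moduli. {x \<in> pot_hull d. residue q x = t q}) \<noteq> {}"
  proof (rule compact_imp_fip_image[OF compact_pot_hull[OF limit_periodic]])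
    show "closed {x \<in> pot_hull d. residue q x = t q}" if "q \<in> moduli" for q
      by (rule closed_residue_fibre[OF that])
    fix S
    assume S: "finite S" "S \<subseteq> moduli"
    obtain q where q: "q \<in> moduli" "\<forall>a\<in>S. a dvd q"
      using moduli_common_multiple[OF S] by blast
    have "residue a (shiftp (t q) d) = t a" if "a \<in> S" for a
    proof -
      have a: "a \<in> moduli"
        using that S(2) by blast
      have "residue a (shiftp (t q) d) = t q mod a"
        by (rule residue_shiftp[OF a])
      also have "\<dots> = t a"
        using q(2) that by (intro assms[OF a q(1)]) blast
      finally show ?thesis .
    qed
    then have "shiftp (t q) d \<in> pot_hull d \<inter> (\<Inter>a\<in>S. {x \<in> pot_hull d. residue a x = t a})"
      using shiftp_in_pot_hull by auto
    then show "pot_hull d \<inter> (\<Inter>a\<in>S. {x \<in> pot_hull d. residue a x = t a}) \<noteq> {}"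
      by blast
  qed
  then obtain x where "x \<in> pot_hull d \<inter> (\<Inter>q\<in>moduli. {x \<in> pot_hull d. residue q x = t q})"
    by blast
  then show thesis
    by (intro that) auto
qed

abbreviation index :: "potential set set" where
  "index \<equiv> modulus_index ` moduli"

abbreviation hull_lim :: "(potential set \<Rightarrow> int) monoid" where
  "hull_lim \<equiv> inv_lim index divides_index residue_group reduction"

abbreviation hull_lim_topology :: "(potential set \<Rightarrow> int) topology" where
  "hull_lim_topology \<equiv> inv_lim_topology index divides_index residue_group reduction"

definition thread :: "potential \<Rightarrow> potential set \<Rightarrow> int" where
  "thread x = (\<lambda>i\<in>index. residue (index_modulus i) x)"

lemma thread_modulus_index [simp]: "q \<in> moduli \<Longrightarrow> thread x (modulus_index q) = residue q x"
  by (simp add: thread_def)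

lemma inverse_system_hull_lim: "inverse_system index divides_index residue_group reduction"
  by (rule inverse_system_residue_groups) (use one_mem_moduli moduli_pos lcm_mem_moduli in auto)

lemma carrier_hull_lim: "carrier hull_lim = inv_lim_carrier index divides_index residue_group reduction"
  by (simp add: inv_lim_def)

lemma threadI:
  assumes "s \<in> extensional index" "t \<in> extensional index"
    and "\<And>q. q \<in> moduli \<Longrightarrow> s (modulus_index q) = t (modulus_index q)"
  shows "s = t"
  using assms by (auto intro: extensionalityI)

lemma thread_image: "thread ` pot_hull d = carrier hull_lim"
proof
  show "thread ` pot_hull d \<subseteq> carrier hull_lim"
    using residue_range residue_mod_dvd moduli_pos
    by (auto simp: carrier_hull_lim inv_lim_carrier_def thread_def carrier_residue_group
        divides_index_def reduction_def)
  show "carrier hull_lim \<subseteq> thread ` pot_hull d"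
  proof
    fix t
    assume "t \<in> carrier hull_lim"
    then have t: "t \<in> extensional index"
      "\<And>a b. a \<in> moduli \<Longrightarrow> b \<in> moduli \<Longrightarrow> a dvd b \<Longrightarrow> t (modulus_index b) mod a = t (modulus_index a)"
      by (auto simp: carrier_hull_lim inv_lim_carrier_def divides_index_def reduction_def PiE_iff)
    obtain x where "x \<in> pot_hull d" "\<And>q. q \<in> moduli \<Longrightarrow> residue q x = t (modulus_index q)"
      using obtains_point_with_residues[of "\<lambda>q. t (modulus_index q)"] t(2) by blast
    moreover have "thread x \<in> extensional index"
      by (simp add: thread_def)
    ultimately have "thread x = t"
      using t(1) by (intro threadI) auto
    with \<open>x \<in> pot_hull d\<close> show "t \<in> thread ` pot_hull d"
      by blast
  qed
qed

lemma inj_on_thread: "inj_on thread (pot_hull d)"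
proof (rule inj_onI)
  fix x y
  assume "x \<in> pot_hull d" "y \<in> pot_hull d" "thread x = thread y"
  then show "x = y"
    using residues_separate by (metis thread_modulus_index)
qed

lemma homeomorphic_map_thread: "homeomorphic_map (top_of_set (pot_hull d)) hull_lim_topology thread"
proof (rule continuous_imp_homeomorphic_map)
  show "continuous_map (top_of_set (pot_hull d)) hull_lim_topology thread"
  proof (rule continuous_map_into_inv_lim)
    show "thread \<in> topspace (top_of_set (pot_hull d)) \<rightarrow> inv_lim_carrier index divides_index residue_group reduction"
      using thread_image carrier_hull_lim by auto
    fix i
    assume "i \<in> index"
    then obtain q where "q \<in> moduli" "i = modulus_index q"
      by blast
    then show "continuous_map (top_of_set (pot_hull d)) (discrete_topology (carrier (residue_group i)))
        (\<lambda>x. thread x i)"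
      using continuous_map_residue moduli_pos by (simp add: carrier_residue_group)
  qed
  show "compact_space (top_of_set (pot_hull d))"
    by (simp add: compact_space_subtopology compact_pot_hull[OF limit_periodic])
  show "Hausdorff_space hull_lim_topology"
    unfolding inv_lim_topology_def
    by (intro Hausdorff_space_subtopology) (simp add: Hausdorff_space_product_topology)
  show "thread ` topspace (top_of_set (pot_hull d)) = topspace hull_lim_topology"
    using thread_image carrier_hull_lim by simp
  show "inj_on thread (topspace (top_of_set (pot_hull d)))"
    using inj_on_thread by simp
qed

lemma thread_in_carrier: "x \<in> pot_hull d \<Longrightarrow> thread x \<in> carrier hull_lim"
  using thread_image by blast

lemma mult_hull_lim:
  "q \<in> moduli \<Longrightarrow> (s \<otimes>\<^bsub>hull_lim\<^esub> t) (modulus_index q) = (s (modulus_index q) + t (modulus_index q)) mod q"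
  using moduli_pos by (simp add: inv_lim_def mult_residue_group)

lemma thread_eq_one: "thread d = \<one>\<^bsub>hull_lim\<^esub>"
  by (rule threadI) (auto simp: thread_def inv_lim_def residue_shiftp[of _ 0, simplified])

lemma thread_shiftp_mult:
  "thread (shiftp j d) \<otimes>\<^bsub>hull_lim\<^esub> thread (shiftp k d) = thread (shiftp (j + k) d)"
proof (rule threadI)
  show "thread (shiftp j d) \<otimes>\<^bsub>hull_lim\<^esub> thread (shiftp k d) \<in> extensional index"
    by (simp add: inv_lim_def)
  show "thread (shiftp (j + k) d) \<in> extensional index"
    by (simp add: thread_def)
  fix q
  assume "q \<in> moduli"
  then show "(thread (shiftp j d) \<otimes>\<^bsub>hull_lim\<^esub> thread (shiftp k d)) (modulus_index q)
      = thread (shiftp (j + k) d) (modulus_index q)"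
    by (simp add: mult_hull_lim residue_shiftp mod_add_eq)
qed

lemma residue_mult:
  assumes G: "hull_group d G" and q: "q \<in> moduli" and x: "x \<in> pot_hull d" and y: "y \<in> pot_hull d"
  shows "residue q (x \<otimes>\<^bsub>G\<^esub> y) = (residue q x + residue q y) mod q"
proof -
  have "modulus_radius q / 2 > 0"
    using modulus_radius_pos[OF q] by simp
  then obtain k l where kl: "dist x (shiftp k d) < modulus_radius q / 2"
    "dist y (shiftp l d) < modulus_radius q / 2"
    "dist (x \<otimes>\<^bsub>G\<^esub> y) (shiftp (k + l) d) < modulus_radius q / 2"
    using hull_group_obtains_orbit_approx[OF G x y] by blast
  have "x \<otimes>\<^bsub>G\<^esub> y \<in> pot_hull d"
    using G x y unfolding hull_group_def topological_group_def by (metis monoid.m_closed group.is_monoid)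
  then have "residue q (x \<otimes>\<^bsub>G\<^esub> y) = (k + l) mod q"
    using kl(3) by (rule residue_eq[OF q])
  moreover have "residue q x = k mod q" "residue q y = l mod q"
    using kl(1,2) by (auto intro: residue_eq[OF q x] residue_eq[OF q y])
  ultimately show ?thesis
    by (simp add: mod_add_eq)
qed

lemma thread_hom:
  assumes G: "hull_group d G"
  shows "thread \<in> hom G hull_lim"
proof -
  have carrier_G: "carrier G = pot_hull d"
    using G unfolding hull_group_def by blast
  have "thread (x \<otimes>\<^bsub>G\<^esub> y) = thread x \<otimes>\<^bsub>hull_lim\<^esub> thread y"
    if "x \<in> pot_hull d" "y \<in> pot_hull d" for x y
  proof (rule threadI)
    show "thread x \<otimes>\<^bsub>hull_lim\<^esub> thread y \<in> extensional index"
      by (simp add: inv_lim_def)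
    show "thread (x \<otimes>\<^bsub>G\<^esub> y) \<in> extensional index"
      by (simp add: thread_def)
    fix q
    assume "q \<in> moduli"
    then show "thread (x \<otimes>\<^bsub>G\<^esub> y) (modulus_index q) = (thread x \<otimes>\<^bsub>hull_lim\<^esub> thread y) (modulus_index q)"
      by (simp add: mult_hull_lim residue_mult[OF G _ that])
  qed
  then show ?thesis
    using thread_in_carrier carrier_G by (auto simp: hom_def)
qed

lemma procyclic_hull_group:
  assumes G: "hull_group d G"
  shows "procyclic G (top_of_set (pot_hull d))"
  unfolding procyclic_def top_group_iso_def
proof (intro exI conjI)
  show "inverse_system index divides_index residue_group reduction"
    by (rule inverse_system_hull_lim)
  show "\<forall>i\<in>index. finite (carrier (residue_group i)) \<and> cyclic_group (residue_group i)"
    using moduli_pos cyclic_residue_group by (auto simp: carrier_residue_group)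
  have "carrier G = pot_hull d"
    using G unfolding hull_group_def by blast
  then show "thread \<in> iso G hull_lim"
    using thread_hom[OF G] inj_on_thread thread_image by (simp add: iso_def bij_betw_def)
  show "homeomorphic_map (top_of_set (pot_hull d)) hull_lim_topology thread"
    by (rule homeomorphic_map_thread)
qed

lemma exists_hull_group: "\<exists>G. hull_group d G"
proof -
  obtain g where g: "homeomorphic_maps (top_of_set (pot_hull d)) hull_lim_topology thread g"
    using homeomorphic_map_thread homeomorphic_map_maps by blast
  then have g_homeo: "homeomorphic_map hull_lim_topology (top_of_set (pot_hull d)) g"
    and g_thread: "\<And>x. x \<in> pot_hull d \<Longrightarrow> g (thread x) = x"
    by (auto simp: homeomorphic_maps_map)
  let ?G = "image_group g hull_lim"
  have top: "topological_group ?G (top_of_set (pot_hull d))"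
    using topological_group_image_group[OF topological_group_inv_lim[OF inverse_system_hull_lim] g_homeo] .
  have carrier_G: "carrier ?G = pot_hull d"
    using top by (simp add: topological_group_def)
  have inj_g: "inj_on g (carrier hull_lim)"
    using g by (auto simp: homeomorphic_maps_def carrier_hull_lim intro: inj_on_inverseI)
  have inv_g: "inv_into (carrier hull_lim) g x = thread x" if "x \<in> pot_hull d" for x
    using inj_g thread_in_carrier[OF that] g_thread[OF that] by (simp add: inv_into_f_eq)
  have "hull_group d ?G"
    unfolding hull_group_def
  proof (intro conjI allI)
    show "carrier ?G = pot_hull d" "topological_group ?G (top_of_set (pot_hull d))"
      by (fact carrier_G, fact top)
    show "\<one>\<^bsub>?G\<^esub> = d"
      using g_thread[OF shiftp_in_pot_hull[of 0]] by (simp add: image_group_one thread_eq_one)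
    show "shiftp (j + k) d = shiftp j d \<otimes>\<^bsub>?G\<^esub> shiftp k d" for j k
      using g_thread[OF shiftp_in_pot_hull] inv_g[OF shiftp_in_pot_hull]
      by (simp add: image_group_def thread_shiftp_mult)
  qed
  then show ?thesis ..
qed

end

theorem theorem4p9:
  fixes d :: potential
  assumes "limit_periodic d"
  shows "(\<exists>G. hull_group d G) \<and>
         (\<forall>G. hull_group d G \<longrightarrow> procyclic G (top_of_set (pot_hull d)))"
proof -
  interpret limit_periodic_potential d
    by unfold_locales (rule assms)
  show ?thesis
    using exists_hull_group procyclic_hull_group by blast
qed

end
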